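(* Assume (H) and (U), and the stationary case. Let $x>0$ and let $a_x\in[-x/\bar z,x/\underline z]$ be a maximizer in $v(x)=\sup_{a\in[-x/\bar z,x/\underline z]}\hat v(x,a)$. Then $D^+v(x)\subseteq D^+_x\hat v(x,a_x)$, where $D^+_x\hat v(x,a_x)$ denotes the superdifferential of the function $y\mapsto\hat v(y,a_x)$ on $[l(a_x),\infty)$ at the point $x$.
   Context: Standing setup. Fix constants $\lambda>0$, $\rho>0$. On a filtered probability space $(\Omega,\mathcal F,(\mathcal F_t)_{t\ge0},\mathbb P)$ let $0=\tau_0<\tau_1<\tau_2<\cdots$ be random times and $(Z_k)_{k\ge1}$ random variables with values in $(-1,\infty)$. Assumption (H): (a) $(\tau_k)_{k\ge1}$ are the jump times of a Poisson process with intensity $\lambda$; (b) for each $k\ge1$, conditionally on $\tau_k-\tau_{k-1}=t$, $Z_k$ is independent of $\{\tau_i,Z_i\}_{i<k}$ and has law $p(t,dz)$, where for every $t\ge0$ the support of $p(t,dz)$ is either an interval with interior $(-\underline z,\bar z)$ or a finite set with smallest element $-\underline z$ and largest element $\bar z$, with $\underline z\in(0,1]$, $\bar z\in(0,\infty]$ ($\bar z<\infty$ in the finite case); (c) $\int z\,p(t,dz)\ge 0$ and $\int(1+z)\,p(t,dz)\le k e^{bt}$ for all $t\ge0$, for some constants $k,b\ge0$; (d) $t\mapsto\int w(z)\,p(t,dz)$ is continuous on $[0,\infty)$ for every measurable $w$ on $(-\underline z,\bar z)$ with linear growth. Assumption (U): $U:[0,\infty)\to\mathbb R$ is strictly increasing,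 strictly concave, $C^1$ on $(0,\infty)$, $U(0)=0$, $U'(0^+)=+\infty$, $U'(+\infty)=0$, $U(x)\le K_1x^\gamma$ for all $x\ge0$ for some $K_1>0$, $\gamma\in(0,1)$, and $\rho>b\gamma+\lambda(k^\gamma\underline z^{-\gamma}-1)$. Original problem: $\mathcal G_t=\sigma\{(\tau_k,Z_k):\tau_k\le t\}$. A control $(\alpha,c)$ consists of real $\alpha_k$, $k\ge1$, with $\alpha_k$ $\mathcal G_{\tau_{k-1}}$-measurable, and a nonnegative $(\mathcal G_t)$-predictable process $c$. For $x\ge0$ the wealth is $X^x_0=x$, $X^x_k=x-\int_0^{\tau_k}c_t\,dt+\sum_{i=1}^k\alpha_iZ_i$; $(\alpha,c)\in\mathcal A(x)$ if $X^x_k\ge0$ a.s. for all $k\ge1$. $v(x)=\sup_{(\alpha,c)\in\mathcal A(x)}\mathbb E\int_0^\infty e^{-\rho t}U(c_t)\,dt$. Auxiliary problem: $l(a)=\max(a\underline z,-a\bar z)$ (with $l(a)=a\underline z$ if $\bar z=\infty$); $A=\mathbb R$ if $\bar z<\infty$ and $A=[0,\infty)$ if $\bar z=\infty$; $\mathcal X=\{(x,a)\in[0,\infty)\times A: x\ge l(a)\}$, $\mathcal D=[0,\infty)\times\mathcal X$; $g(t,x,a)=\lambda\int v(x+az)\,p(t,dz)$. For $(t,x,a)\in\mathcal D$, $\mathcal C_a(t,x)$ is the set of deterministic measurable $c:[t,\infty)\to[0,\infty)$ with $\int_t^s c_u\,du\le x-l(a)$ for all $s\ge t$, with state $Y_s=x-\int_t^s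 c_u\,du$; $\hat v(t,x,a)=\sup_{c\in\mathcal C_a(t,x)}\int_t^\infty e^{-(\rho+\lambda)(s-t)}[U(c_s)+g(s,Y_s,a)]\,ds$. It is known that $v(x)=\sup_{a\in[-x/\bar z,\,x/\underline z]}\hat v(0,x,a)$ (with $-x/\bar z:=0$ if $\bar z=\infty$). Stationary case: $p(t,dz)=p(dz)$ does not depend on $t$; then $g$ and $\hat v$ do not depend on $t$ and are written $g(x,a)$, $\hat v(x,a)$. Superdifferential: for a continuous real function $u$ on a set $S\subset\mathbb R^n$ and $y\in S$, $D^+u(y)=\{p\in\mathbb R^n:\limsup_{z\in S,z\to y}\frac{u(z)-u(y)-\langle p,z-y\rangle}{|z-y|}\le0\}$. *)

theory Defs
  imports "HOL-Analysis.Analysis" "HOL-Probability.Probability"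
begin

definition superdiff :: "('a::real_inner \<Rightarrow> real) \<Rightarrow> 'a set \<Rightarrow> 'a \<Rightarrow> 'a set" where
  "superdiff u S y =
     {p. Limsup (at y within S) (\<lambda>z. ereal ((u z - u y - inner p (z - y)) / norm (z - y))) \<le> 0}"

definition strictly_concave_on :: "real set \<Rightarrow> (real \<Rightarrow> real) \<Rightarrow> bool" where
  "strictly_concave_on S f \<longleftrightarrow> convex S \<and>
     (\<forall>x\<in>S. \<forall>y\<in>S. x \<noteq> y \<longrightarrow> (\<forall>t. 0 < t \<and> t < 1 \<longrightarrow>
        f ((1 - t) * x + t * y) > (1 - t) * f x + t * f y))"

definition msupp :: "real measure \<Rightarrow> real set" where
  "msupp M = {z. \<forall>e>0. emeasure M (ball z e) \<noteq> 0}"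

text \<open>The function l(a); zb is the upper bound of the support (possibly infinite).\<close>
definition lfun :: "real \<Rightarrow> ereal \<Rightarrow> real \<Rightarrow> real" where
  "lfun zl zb a = (if zb = \<infinity> then a * zl else max (a * zl) (- a * real_of_ereal zb))"

definition Aset :: "ereal \<Rightarrow> real set" where
  "Aset zb = (if zb = \<infinity> then {0..} else UNIV)"

definition aint :: "real \<Rightarrow> ereal \<Rightarrow> real \<Rightarrow> real set" where
  "aint zl zb x = {(if zb = \<infinity> then 0 else - x / real_of_ereal zb) .. x / zl}"

definition gfun :: "real \<Rightarrow> (real \<Rightarrow> real measure) \<Rightarrow> (real \<Rightarrow> real) \<Rightarrow>
                    real \<Rightarrow> real \<Rightarrow> real \<Rightarrow> ennreal" where
  "gfun lam p v t x a = ennreal lam * (\<integral>\<^sup>+ z. ennreal (v (x + a * z)) \<partial>(p t))"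

definition Cadm :: "real \<Rightarrow> ereal \<Rightarrow> real \<Rightarrow> real \<Rightarrow> real \<Rightarrow> (real \<Rightarrow> real) set" where
  "Cadm zl zb t x a = {c. c \<in> borel_measurable borel \<and> (\<forall>u\<ge>t. 0 \<le> c u) \<and>
      (\<forall>s\<ge>t. (\<integral>\<^sup>+ u\<in>{t..s}. ennreal (c u) \<partial>lborel) \<le> ennreal (x - lfun zl zb a))}"

definition Ystate :: "(real \<Rightarrow> real) \<Rightarrow> real \<Rightarrow> real \<Rightarrow> real \<Rightarrow> real" where
  "Ystate c t x s = x - enn2real (\<integral>\<^sup>+ u\<in>{t..s}. ennreal (c u) \<partial>lborel)"

definition vhat_enn :: "(real \<Rightarrow> real) \<Rightarrow> real \<Rightarrow> real \<Rightarrow> real \<Rightarrow> ereal \<Rightarrow>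
     (real \<Rightarrow> real measure) \<Rightarrow> (real \<Rightarrow> real) \<Rightarrow> real \<Rightarrow> real \<Rightarrow> real \<Rightarrow> ennreal" where
  "vhat_enn U rho lam zl zb p v t x a =
     (SUP c\<in>Cadm zl zb t x a.
        \<integral>\<^sup>+ s\<in>{t..}. ennreal (exp (- (rho + lam) * (s - t))) *
            (ennreal (U (c s)) + gfun lam p v s (Ystate c t x s) a) \<partial>lborel)"

definition vhat :: "(real \<Rightarrow> real) \<Rightarrow> real \<Rightarrow> real \<Rightarrow> real \<Rightarrow> ereal \<Rightarrow>
     (real \<Rightarrow> real measure) \<Rightarrow> (real \<Rightarrow> real) \<Rightarrow> real \<Rightarrow> real \<Rightarrow> real \<Rightarrow> real" where
  "vhat U rho lam zl zb p v t x a = enn2real (vhat_enn U rho lam zl zb p v t x a)"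

definition support_cond :: "real measure \<Rightarrow> real \<Rightarrow> ereal \<Rightarrow> bool" where
  "support_cond P zl zb \<longleftrightarrow>
     (is_interval (msupp P) \<and> interior (msupp P) = {z. - zl < z \<and> ereal z < zb})
   \<or> (finite (msupp P) \<and> msupp P \<noteq> {} \<and> zb < \<infinity> \<and>
      Min (msupp P) = - zl \<and> ereal (Max (msupp P)) = zb)"

end

theory Submission
  imports Defs
begin

(* Fix the maximiser a_x and write h(y) = vhat(y, a_x) on S = [l(a_x), oo).
   For every y in S the control a_x is admissible at wealth y, i.e. a_x lies in the interval
   [-y/zb, y/zl] over which v(y) is the supremum of vhat(y,.); hence h <= v on S.  At y = x
   the maximality of a_x gives h(x) = v(x).  Moreover S is contained in [0, oo) because
   l(a) >= 0.  A function touching another one from below at a point has a larger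
   superdifferential there (on a smaller domain), which is the claim. *)

lemma Limsup_filter_mono:
  assumes "F \<le> G"
  shows "Limsup F f \<le> Limsup G f"
  unfolding Limsup_def
proof (safe intro!: INF_mono)
  fix P assume "eventually P G"
  then have "eventually P F" using assms by (simp add: le_filter_def)
  then show "\<exists>Q\<in>{P. eventually P F}. Sup (f ` (Collect Q)) \<le> Sup (f ` (Collect P))"
    by blast
qed

text \<open>If u lies below w on S \<subseteq> T and touches it at y, every supergradient of w on T at y
  is a supergradient of u on S at y: the difference quotients of u are dominated by
  those of w, and restricting to S only lowers the Limsup.\<close>
lemma superdiff_touching_below:
  fixes u w :: "'a::real_inner \<Rightarrow> real"
  assumes "S \<subseteq> T" and below: "\<And>z. z \<in> S \<Longrightarrow> u z \<le> w z" and touch: "u y = w y"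
  shows "superdiff w T y \<subseteq> superdiff u S y"
proof
  fix p assume "p \<in> superdiff w T y"
  then have w_sup: "Limsup (at y within T)
      (\<lambda>z. ereal ((w z - w y - inner p (z - y)) / norm (z - y))) \<le> 0"
    by (simp add: superdiff_def)
  have "Limsup (at y within S) (\<lambda>z. ereal ((u z - u y - inner p (z - y)) / norm (z - y)))
     \<le> Limsup (at y within S) (\<lambda>z. ereal ((w z - w y - inner p (z - y)) / norm (z - y)))"
    unfolding touch
  proof (rule Limsup_mono)
    show "\<forall>\<^sub>F z in at y within S. ereal ((u z - w y - inner p (z - y)) / norm (z - y))
        \<le> ereal ((w z - w y - inner p (z - y)) / norm (z - y))"
      unfolding eventually_at_filter
      by (rule always_eventually) (auto intro!: divide_right_mono dest: below)
  qed
  also have "\<dots> \<le> Limsup (at y within T)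
      (\<lambda>z. ereal ((w z - w y - inner p (z - y)) / norm (z - y)))"
    by (rule Limsup_filter_mono[OF at_le[OF \<open>S \<subseteq> T\<close>]])
  finally show "p \<in> superdiff u S y"
    using w_sup by (simp add: superdiff_def)
qed

text \<open>When zb is infinite the admissible interval is [0, y/zl], so admissible controls are
  nonnegative; this sign condition is what the facts about l below require.\<close>
lemma aint_sign:
  assumes "a \<in> aint zl zb y" and "zb = \<infinity>"
  shows "a \<ge> 0"
  using assms by (auto simp: aint_def)

lemma lfun_nonneg:
  assumes "0 < zl" and "0 < zb" and sign: "zb = \<infinity> \<Longrightarrow> a \<ge> 0"
  shows "lfun zl zb a \<ge> 0"
proof (cases "zb = \<infinity>")
  case True
  then show ?thesis using sign \<open>0 < zl\<close> by (simp add: lfun_def)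
next
  case False
  then have "real_of_ereal zb > 0" using \<open>0 < zb\<close> by (cases zb) auto
  then have "0 \<le> a * zl \<or> 0 \<le> - a * real_of_ereal zb"
    using \<open>0 < zl\<close> by (cases "a \<ge> 0") (auto simp: mult_nonpos_nonneg)
  then show ?thesis using False by (auto simp: lfun_def)
qed

lemma aint_of_lfun_le:
  assumes "0 < zl" and "0 < zb" and sign: "zb = \<infinity> \<Longrightarrow> a \<ge> 0"
    and y: "lfun zl zb a \<le> y"
  shows "a \<in> aint zl zb y"
proof (cases "zb = \<infinity>")
  case True
  then show ?thesis
    using y sign \<open>0 < zl\<close> by (simp add: lfun_def aint_def pos_le_divide_eq)
next
  case False
  define r where "r = real_of_ereal zb"
  have r: "r > 0" using False \<open>0 < zb\<close> unfolding r_def by (cases zb) auto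
  have "a * zl \<le> y" "- y \<le> a * r"
    using y False by (auto simp: lfun_def r_def)
  then have "a \<le> y / zl" "- y / r \<le> a"
    using r \<open>0 < zl\<close> by (simp_all only: pos_le_divide_eq pos_divide_le_eq)
  then show ?thesis using False by (simp add: aint_def r_def)
qed

lemma vhat_le_value:
  assumes v_rep: "\<forall>y\<ge>0. v y \<ge> 0 \<and>
        ennreal (v y) = (SUP a\<in>aint zl zb y. vhat_enn U rho lam zl zb p v t y a)"
    and "y \<ge> 0" and "a \<in> aint zl zb y"
  shows "vhat U rho lam zl zb p v t y a \<le> v y"
proof -
  have "vhat_enn U rho lam zl zb p v t y a \<le> ennreal (v y)"
    using v_rep assms(2,3) by (metis SUP_upper)
  then show ?thesis
    unfolding vhat_def using v_rep \<open>y \<ge> 0\<close>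
    by (metis enn2real_ennreal enn2real_mono ennreal_less_top)
qed

lemma vhat_eq_value_at_maximiser:
  assumes v_rep: "\<forall>y\<ge>0. v y \<ge> 0 \<and>
        ennreal (v y) = (SUP a\<in>aint zl zb y. vhat_enn U rho lam zl zb p v t y a)"
    and "x \<ge> 0"
    and max: "vhat_enn U rho lam zl zb p v t x ax
                = (SUP a\<in>aint zl zb x. vhat_enn U rho lam zl zb p v t x a)"
  shows "vhat U rho lam zl zb p v t x ax = v x"
  unfolding vhat_def using assms by (metis enn2real_ennreal)

theorem lemma4p1:
  fixes lam rho zl k b K1 gam :: real and zb :: ereal
    and P :: "real measure" and U v :: "real \<Rightarrow> real" and x ax :: real
  assumes lam: "lam > 0" and rho: "rho > 0"
    (* (H), stationary case p(t,dz) = P *)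
    and zl: "0 < zl" "zl \<le> 1" and zb: "0 < zb"
    and P_prob: "prob_space P" and P_sets: "sets P = sets borel"
    and P_supp: "support_cond P zl zb"
    and kb: "k \<ge> 0" "b \<ge> 0"
    and P_int: "integrable P (\<lambda>z. z)"
    and P_mean: "(\<integral>z. z \<partial>P) \<ge> 0"
    and P_growth: "\<forall>t\<ge>0. (\<integral>z. (1 + z) \<partial>P) \<le> k * exp (b * t)"
    (* (U) *)
    and U_mono: "strict_mono_on {0..} U"
    and U_conc: "strictly_concave_on {0..} U"
    and U_C1: "\<forall>y>0. U differentiable at y" "continuous_on {0<..} (deriv U)"
    and U0: "U 0 = 0"
    and U'0: "filterlim (deriv U) at_top (at_right 0)"
    and U'inf: "(deriv U \<longlongrightarrow> 0) at_top"
    and K1: "K1 > 0" and gam: "0 < gam" "gam < 1"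
    and U_bound: "\<forall>y\<ge>0. U y \<le> K1 * y powr gam"
    and rho_big: "rho > b * gam + lam * (k powr gam * zl powr (- gam) - 1)"
    (* known representation of the value function v on [0,oo) *)
    and v_rep: "\<forall>y\<ge>0. v y \<ge> 0 \<and>
        ennreal (v y) = (SUP a\<in>aint zl zb y. vhat_enn U rho lam zl zb (\<lambda>_. P) v 0 y a)"
    (* x > 0 and a_x a maximizer *)
    and x: "x > 0"
    and ax: "ax \<in> aint zl zb x"
    and ax_max: "vhat_enn U rho lam zl zb (\<lambda>_. P) v 0 x ax
                   = (SUP a\<in>aint zl zb x. vhat_enn U rho lam zl zb (\<lambda>_. P) v 0 x a)"
  shows "superdiff v {0..} x
           \<subseteq> superdiff (\<lambda>y. vhat U rho lam zl zb (\<lambda>_. P) v 0 y ax) {lfun zl zb ax..} x"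
proof (rule superdiff_touching_below)
  have sign: "zb = \<infinity> \<Longrightarrow> ax \<ge> 0" using aint_sign[OF ax] .
  show "{lfun zl zb ax..} \<subseteq> {0..}"
    using lfun_nonneg[OF zl(1) zb sign] by auto
  show "vhat U rho lam zl zb (\<lambda>_. P) v 0 y ax \<le> v y" if "y \<in> {lfun zl zb ax..}" for y
  proof -
    have "y \<ge> 0" using that lfun_nonneg[OF zl(1) zb sign] by auto
    moreover have "ax \<in> aint zl zb y"
      using that aint_of_lfun_le[OF zl(1) zb sign] by auto
    ultimately show ?thesis using vhat_le_value[OF v_rep] by blast
  qed
  show "vhat U rho lam zl zb (\<lambda>_. P) v 0 x ax = v x"
    using vhat_eq_value_at_maximiser[OF v_rep _ ax_max] x by simp
qed

end
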